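(* Let $(\mathcal{A},\mu,\alpha)$ be a multiplicative Hom-alternative superalgebra. Then the $n$th derived Hom-superalgebra $\mathcal{A}^{n}=(\mathcal{A},\mu^{(n)}=\alpha^{2^{n}-1}\circ\mu,\alpha^{2^{n}})$ is also a multiplicative Hom-alternative superalgebra for each $n\geq0$.
   Context: $\mathcal{A}=\mathcal{A}_0\oplus\mathcal{A}_1$ is a $\mathbb{Z}_2$-graded vector space over an algebraically closed field $\mathbb{K}$ of characteristic $0$; $|x|$ is the parity of homogeneous $x$; even maps preserve parity. For even bilinear $\mu$ and even linear $\alpha$, $\widetilde{as}(x,y,z)=\mu(\mu(x,y),\alpha(z))-\mu(\alpha(x),\mu(y,z))$. A Hom-alternative superalgebra is a triple $(\mathcal{A},\mu,\alpha)$ with $\widetilde{as}(x,y,z)+(-1)^{|x||y|}\widetilde{as}(y,x,z)=0$ and $\widetilde{as}(x,y,z)+(-1)^{|y||z|}\widetilde{as}(x,z,y)=0$ for all homogeneous $x,y,z$; it is multiplicative if $\alpha\circ\mu=\mu\circ(\alpha\otimes\alpha)$. *)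

theory Defs
  imports Main "HOL-Computational_Algebra.Polynomial"
begin

definition alg_closed_field :: "'k::field itself \<Rightarrow> bool" where
  "alg_closed_field _ \<longleftrightarrow> (\<forall>p :: 'k poly. degree p > 0 \<longrightarrow> (\<exists>x. poly p x = 0))"

text \<open>A Z2-graded vector space V = A0 (+) A1 over the scalars of scale
  (the whole type 'v is the underlying space).\<close>
definition graded_space :: "('k::field \<Rightarrow> 'v::ab_group_add \<Rightarrow> 'v) \<Rightarrow> 'v set \<Rightarrow> 'v set \<Rightarrow> bool" where
  "graded_space scale A0 A1 \<longleftrightarrow>
     vector_space scale \<and> module.subspace scale A0 \<and> module.subspace scale A1 \<and>
     A0 \<inter> A1 = {0} \<and> (\<forall>x. \<exists>a\<in>A0. \<exists>b\<in>A1. x = a + b)"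

definition grade :: "'v set \<Rightarrow> 'v set \<Rightarrow> nat \<Rightarrow> 'v set" where
  "grade A0 A1 i = (if i = 0 then A0 else A1)"

definition even_bilinear ::
  "('k::field \<Rightarrow> 'v::ab_group_add \<Rightarrow> 'v) \<Rightarrow> 'v set \<Rightarrow> 'v set \<Rightarrow> ('v \<Rightarrow> 'v \<Rightarrow> 'v) \<Rightarrow> bool" where
  "even_bilinear scale A0 A1 mu \<longleftrightarrow>
     (\<forall>x. Vector_Spaces.linear scale scale (mu x)) \<and>
     (\<forall>y. Vector_Spaces.linear scale scale (\<lambda>x. mu x y)) \<and>
     (\<forall>i<2. \<forall>j<2. \<forall>x\<in>grade A0 A1 i. \<forall>y\<in>grade A0 A1 j. mu x y \<in> grade A0 A1 ((i + j) mod 2))"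

definition even_linear ::
  "('k::field \<Rightarrow> 'v::ab_group_add \<Rightarrow> 'v) \<Rightarrow> 'v set \<Rightarrow> 'v set \<Rightarrow> ('v \<Rightarrow> 'v) \<Rightarrow> bool" where
  "even_linear scale A0 A1 f \<longleftrightarrow>
     Vector_Spaces.linear scale scale f \<and> f ` A0 \<subseteq> A0 \<and> f ` A1 \<subseteq> A1"

definition hom_assoc :: "('v \<Rightarrow> 'v \<Rightarrow> 'v::ab_group_add) \<Rightarrow> ('v \<Rightarrow> 'v) \<Rightarrow> 'v \<Rightarrow> 'v \<Rightarrow> 'v \<Rightarrow> 'v" where
  "hom_assoc mu alpha x y z = mu (mu x y) (alpha z) - mu (alpha x) (mu y z)"

definition hom_alt_superalgebra ::
  "('k::field \<Rightarrow> 'v::ab_group_add \<Rightarrow> 'v) \<Rightarrow> 'v set \<Rightarrow> 'v set \<Rightarrow> ('v \<Rightarrow> 'v \<Rightarrow> 'v) \<Rightarrow> ('v \<Rightarrow> 'v) \<Rightarrow> bool" where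
  "hom_alt_superalgebra scale A0 A1 mu alpha \<longleftrightarrow>
     graded_space scale A0 A1 \<and> even_bilinear scale A0 A1 mu \<and> even_linear scale A0 A1 alpha \<and>
     (\<forall>i<2. \<forall>j<2. \<forall>k<2. \<forall>x\<in>grade A0 A1 i. \<forall>y\<in>grade A0 A1 j. \<forall>z\<in>grade A0 A1 k.
        hom_assoc mu alpha x y z + scale ((-1) ^ (i * j)) (hom_assoc mu alpha y x z) = 0 \<and>
        hom_assoc mu alpha x y z + scale ((-1) ^ (j * k)) (hom_assoc mu alpha x z y) = 0)"

definition multiplicative :: "('v \<Rightarrow> 'v \<Rightarrow> 'v) \<Rightarrow> ('v \<Rightarrow> 'v) \<Rightarrow> bool" where
  "multiplicative mu alpha \<longleftrightarrow> (\<forall>x y. alpha (mu x y) = mu (alpha x) (alpha y))"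

definition derived_mu :: "('v \<Rightarrow> 'v \<Rightarrow> 'v) \<Rightarrow> ('v \<Rightarrow> 'v) \<Rightarrow> nat \<Rightarrow> 'v \<Rightarrow> 'v \<Rightarrow> 'v" where
  "derived_mu mu alpha n = (\<lambda>x y. (alpha ^^ (2 ^ n - 1)) (mu x y))"

definition derived_alpha :: "('v \<Rightarrow> 'v) \<Rightarrow> nat \<Rightarrow> 'v \<Rightarrow> 'v" where
  "derived_alpha alpha n = alpha ^^ (2 ^ n)"

end

theory Submission
  imports Defs
begin

text \<open>The n-th derived Hom-superalgebra is the twist of \<open>(\<mu>, \<alpha>)\<close> by
  \<open>\<beta> = \<alpha>^(2^n - 1)\<close>: its product is \<open>\<beta> \<circ> \<mu>\<close> and its twisting map is \<open>\<beta> \<circ> \<alpha>\<close>.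
  For any even linear \<open>\<beta>\<close> that is multiplicative for \<open>\<mu>\<close>, the Hom-associator of the
  twisted structure is \<open>\<beta> (\<beta> (as x y z))\<close>, so the super-alternativity identities survive
  the twist by linearity of \<open>\<beta>\<close>; if \<open>\<beta>\<close> also commutes with \<open>\<alpha>\<close>, so does
  multiplicativity.\<close>

lemma linear_funpow:
  assumes "Vector_Spaces.linear s s f"
  shows "Vector_Spaces.linear s s (f ^^ k)"
proof (induction k)
  case 0
  show ?case using assms by (simp add: Vector_Spaces.linear_iff)
next
  case (Suc k)
  show ?case
    unfolding funpow_Suc_right by (rule Vector_Spaces.linear_compose[OF assms Suc])
qed

lemma funpow_image_subset:
  assumes "f ` A \<subseteq> A"
  shows "(f ^^ k) ` A \<subseteq> A"
  using assms by (induction k) auto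

lemma funpow_multiplicative:
  assumes "multiplicative mu alpha"
  shows "(alpha ^^ k) (mu x y) = mu ((alpha ^^ k) x) ((alpha ^^ k) y)"
  using assms by (induction k) (auto simp: multiplicative_def)

lemma funpow_pred_comp:
  assumes "0 < m"
  shows "f ^^ m = f ^^ (m - 1) \<circ> f"
  using assms by (cases m) (simp_all only: funpow_Suc_right diff_Suc_1 less_irrefl)

lemma even_linear_funpow:
  assumes "even_linear s A0 A1 f"
  shows "even_linear s A0 A1 (f ^^ k)"
  using assms by (simp add: even_linear_def linear_funpow funpow_image_subset)

lemma even_linear_grade:
  assumes "even_linear s A0 A1 f" and "x \<in> grade A0 A1 i"
  shows "f x \<in> grade A0 A1 i"
  using assms by (auto simp: even_linear_def grade_def split: if_splits)

lemma even_linear_comp: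
  assumes "even_linear s A0 A1 f" and "even_linear s A0 A1 g"
  shows "even_linear s A0 A1 (g \<circ> f)"
  using assms Vector_Spaces.linear_compose[of s s f s g]
  unfolding even_linear_def by (simp add: image_subset_iff)

lemma even_bilinear_twist:
  assumes mu: "even_bilinear s A0 A1 mu" and beta: "even_linear s A0 A1 beta"
  shows "even_bilinear s A0 A1 (\<lambda>x y. beta (mu x y))"
proof -
  have lin: "Vector_Spaces.linear s s beta" using beta by (simp add: even_linear_def)
  have "Vector_Spaces.linear s s (beta \<circ> mu x)" for x
    using mu by (intro Vector_Spaces.linear_compose[OF _ lin]) (simp add: even_bilinear_def)
  moreover have "Vector_Spaces.linear s s (beta \<circ> (\<lambda>x. mu x y))" for y
    using mu by (intro Vector_Spaces.linear_compose[OF _ lin]) (simp add: even_bilinear_def)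
  ultimately show ?thesis
    using mu even_linear_grade[OF beta] by (simp add: even_bilinear_def comp_def)
qed

lemma hom_assoc_twist:
  fixes beta :: "'v::ab_group_add \<Rightarrow> 'v"
  assumes lin: "Vector_Spaces.linear s s beta"
    and mult: "\<And>x y. beta (mu x y) = mu (beta x) (beta y)"
  shows "hom_assoc (\<lambda>x y. beta (mu x y)) (beta \<circ> alpha) x y z
         = beta (beta (hom_assoc mu alpha x y z))"
  using module_hom.diff[of s s beta] lin
  by (simp add: Vector_Spaces.linear_def hom_assoc_def mult)

lemma hom_alt_superalgebraI:
  assumes "graded_space s A0 A1" "even_bilinear s A0 A1 mu" "even_linear s A0 A1 alpha"
    and "\<And>i j k x y z. \<lbrakk>i < 2; j < 2; k < 2; x \<in> grade A0 A1 i; y \<in> grade A0 A1 j; z \<in> grade A0 A1 k\<rbrakk>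
      \<Longrightarrow> hom_assoc mu alpha x y z + s ((-1) ^ (i * j)) (hom_assoc mu alpha y x z) = 0"
    and "\<And>i j k x y z. \<lbrakk>i < 2; j < 2; k < 2; x \<in> grade A0 A1 i; y \<in> grade A0 A1 j; z \<in> grade A0 A1 k\<rbrakk>
      \<Longrightarrow> hom_assoc mu alpha x y z + s ((-1) ^ (j * k)) (hom_assoc mu alpha x z y) = 0"
  shows "hom_alt_superalgebra s A0 A1 mu alpha"
  unfolding hom_alt_superalgebra_def using assms by blast

lemma hom_alt_superalgebraD:
  assumes "hom_alt_superalgebra s A0 A1 mu alpha"
  shows "graded_space s A0 A1" "even_bilinear s A0 A1 mu" "even_linear s A0 A1 alpha"
    and "\<lbrakk>i < 2; j < 2; k < 2; x \<in> grade A0 A1 i; y \<in> grade A0 A1 j; z \<in> grade A0 A1 k\<rbrakk>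
      \<Longrightarrow> hom_assoc mu alpha x y z + s ((-1) ^ (i * j)) (hom_assoc mu alpha y x z) = 0"
    and "\<lbrakk>i < 2; j < 2; k < 2; x \<in> grade A0 A1 i; y \<in> grade A0 A1 j; z \<in> grade A0 A1 k\<rbrakk>
      \<Longrightarrow> hom_assoc mu alpha x y z + s ((-1) ^ (j * k)) (hom_assoc mu alpha x z y) = 0"
  using assms unfolding hom_alt_superalgebra_def by blast+

lemma hom_alt_superalgebra_twist:
  assumes alt: "hom_alt_superalgebra s A0 A1 mu alpha"
    and beta: "even_linear s A0 A1 beta"
    and mult: "\<And>x y. beta (mu x y) = mu (beta x) (beta y)"
  shows "hom_alt_superalgebra s A0 A1 (\<lambda>x y. beta (mu x y)) (beta \<circ> alpha)"
proof (rule hom_alt_superalgebraI)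
  show "graded_space s A0 A1"
    by (rule hom_alt_superalgebraD(1)[OF alt])
  show "even_bilinear s A0 A1 (\<lambda>x y. beta (mu x y))"
    by (rule even_bilinear_twist[OF hom_alt_superalgebraD(2)[OF alt] beta])
  show "even_linear s A0 A1 (beta \<circ> alpha)"
    by (rule even_linear_comp[OF hom_alt_superalgebraD(3)[OF alt] beta])
  have "module_hom s s beta"
    using beta by (simp add: even_linear_def Vector_Spaces.linear_def)
  then interpret module_hom s s beta .
  have vanish: "beta (beta u) + s c (beta (beta v)) = 0" if "u + s c v = 0" for u v c
  proof -
    have "beta (beta u) + s c (beta (beta v)) = beta (beta (u + s c v))"
      by (simp only: add scale)
    then show ?thesis
      using that by simp
  qed
  have twist: "hom_assoc (\<lambda>x y. beta (mu x y)) (beta \<circ> alpha) x y z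
               = beta (beta (hom_assoc mu alpha x y z))" for x y z
    using beta by (intro hom_assoc_twist[of s] mult) (simp add: even_linear_def)
  show "hom_assoc (\<lambda>x y. beta (mu x y)) (beta \<circ> alpha) x y z
      + s ((-1) ^ (i * j)) (hom_assoc (\<lambda>x y. beta (mu x y)) (beta \<circ> alpha) y x z) = 0"
    if "i < 2" "j < 2" "k < 2" "x \<in> grade A0 A1 i" "y \<in> grade A0 A1 j" "z \<in> grade A0 A1 k"
    for i j k :: nat and x y z
    unfolding twist by (rule vanish, rule hom_alt_superalgebraD(4)[OF alt that])
  show "hom_assoc (\<lambda>x y. beta (mu x y)) (beta \<circ> alpha) x y z
      + s ((-1) ^ (j * k)) (hom_assoc (\<lambda>x y. beta (mu x y)) (beta \<circ> alpha) x z y) = 0"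
    if "i < 2" "j < 2" "k < 2" "x \<in> grade A0 A1 i" "y \<in> grade A0 A1 j" "z \<in> grade A0 A1 k"
    for i j k :: nat and x y z
    unfolding twist by (rule vanish, rule hom_alt_superalgebraD(5)[OF alt that])
qed

lemma multiplicative_twist:
  assumes "multiplicative mu alpha"
    and "\<And>x y. beta (mu x y) = mu (beta x) (beta y)"
    and "\<And>x. beta (alpha x) = alpha (beta x)"
  shows "multiplicative (\<lambda>x y. beta (mu x y)) (beta \<circ> alpha)"
  using assms by (simp add: multiplicative_def)

theorem mainTheorem12:
  fixes scale :: "'k::field_char_0 \<Rightarrow> 'v::ab_group_add \<Rightarrow> 'v"
    and A0 A1 :: "'v set"
    and mu :: "'v \<Rightarrow> 'v \<Rightarrow> 'v"
    and alpha :: "'v \<Rightarrow> 'v"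
    and n :: nat
  assumes "alg_closed_field TYPE('k)"
    and alt: "hom_alt_superalgebra scale A0 A1 mu alpha"
    and mult: "multiplicative mu alpha"
  shows "hom_alt_superalgebra scale A0 A1 (derived_mu mu alpha n) (derived_alpha alpha n) \<and>
         multiplicative (derived_mu mu alpha n) (derived_alpha alpha n)"
proof -
  define beta where "beta = alpha ^^ (2 ^ n - 1)"
  have mu_n: "derived_mu mu alpha n = (\<lambda>x y. beta (mu x y))"
    unfolding derived_mu_def beta_def ..
  have alpha_n: "derived_alpha alpha n = beta \<circ> alpha"
    unfolding derived_alpha_def beta_def by (rule funpow_pred_comp) simp
  have beta_even: "even_linear scale A0 A1 beta"
    unfolding beta_def by (rule even_linear_funpow[OF hom_alt_superalgebraD(3)[OF alt]])
  have beta_mult: "beta (mu x y) = mu (beta x) (beta y)" for x y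
    unfolding beta_def by (rule funpow_multiplicative[OF mult])
  have beta_comm: "beta (alpha x) = alpha (beta x)" for x
    unfolding beta_def by (rule funpow_swap1[symmetric])
  show ?thesis
    unfolding mu_n alpha_n
  proof
    show "hom_alt_superalgebra scale A0 A1 (\<lambda>x y. beta (mu x y)) (beta \<circ> alpha)"
      by (rule hom_alt_superalgebra_twist[OF alt beta_even]) (rule beta_mult)
    show "multiplicative (\<lambda>x y. beta (mu x y)) (beta \<circ> alpha)"
      by (rule multiplicative_twist[OF mult]) (rule beta_mult beta_comm)+
  qed
qed

end
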